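(* Let $p<q$ be coprime positive integers, $m$ a positive integer, $j\in\{3,4\}$ and $R=\mathbb C[X_0,X_1,X_j]$. Define $\mu:\mathbb Z^3\to\mathbb Z^3$, $\mu(d_0,d_1,d_j)=(d_0-pd_1+qd_j,\;d_1-d_j,\;pd_1-qd_j)$ (injective), $\Lambda=\mu(\mathbb Z_{\ge0}^3)$, and for $\lambda\in\Lambda$ let $f_\lambda=X_0^{d_0}X_1^{d_1}X_j^{d_j}$ where $\mu(d_0,d_1,d_j)=\lambda$. For $(n,c)$ with $(n,c,\omega)\in\Lambda$ for some $\omega$, let $\omega_{(n,c)}=\min\{\omega:(n,c,\omega)\in\Lambda\}$. For $(n,d)\in\mathbb Z\times\mathbb Z/m\mathbb Z$ let $\Lambda_{(n,d)}=\{(n,c,\omega)\in\Lambda: c\equiv d\pmod m\}$ and $c_{(n,d)}=\min\{c\in\mathbb Z:c\equiv d\pmod m,\ (n,c,\omega)\in\Lambda\text{ for some }\omega\}$. Let $\lambda=(n,c,\omega)\in\Lambda_{(n,d)}$. Then: (i) $f_\lambda\in(X_0^{q-p})$ if and only if $\omega>\omega_{(n,c)}$; (ii) if $m=a(q-p)$ for a positive integer $a$, $\omega=\omega_{(n,c)}$ and $c>c_{(n,d)}$, then $f_\lambda\in(X_1^{aq}X_j^{ap})$.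
   Context: Ideals are taken in $R$. The minima $\omega_{(n,c)}$ and $c_{(n,d)}$ exist (the defining sets are nonempty and bounded below). *)

theory Defs
  imports Complex_Main "HOL-Library.Poly_Mapping" "HOL-Computational_Algebra.Primes" "HOL-Number_Theory.Cong"
begin

(* Polynomials over C in variables X_i (i :: nat): monomials are finitely supported
   exponent vectors nat \<Rightarrow>\<^sub>0 nat, polynomials are finitely supported coefficient maps. *)
type_synonym mpoly = "(nat \<Rightarrow>\<^sub>0 nat) \<Rightarrow>\<^sub>0 complex"

definition Var :: "nat \<Rightarrow> mpoly" where
  "Var i = Poly_Mapping.single (Poly_Mapping.single i 1) 1"

(* C[X_v : v \<in> V] as a subring of the polynomial ring in countably many variables *)
definition polyring :: "nat set \<Rightarrow> mpoly set" where
  "polyring V = {f. \<forall>mon \<in> Poly_Mapping.keys f. Poly_Mapping.keys mon \<subseteq> V}"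

definition pideal :: "mpoly set \<Rightarrow> mpoly \<Rightarrow> mpoly set" where
  "pideal Rg g = {h * g | h. h \<in> Rg}"

definition mu :: "int \<Rightarrow> int \<Rightarrow> int \<times> int \<times> int \<Rightarrow> int \<times> int \<times> int" where
  "mu p q = (\<lambda>(d0, d1, dj). (d0 - p * d1 + q * dj, d1 - dj, p * d1 - q * dj))"

definition Lambda :: "int \<Rightarrow> int \<Rightarrow> (int \<times> int \<times> int) set" where
  "Lambda p q = mu p q ` {(d0, d1, dj). d0 \<ge> 0 \<and> d1 \<ge> 0 \<and> dj \<ge> 0}"

definition flam :: "int \<Rightarrow> int \<Rightarrow> nat \<Rightarrow> int \<times> int \<times> int \<Rightarrow> mpoly" where
  "flam p q j l = (case (THE d. d \<in> {(d0, d1, dj). d0 \<ge> 0 \<and> d1 \<ge> 0 \<and> dj \<ge> 0} \<and> mu p q d = l) of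
     (d0, d1, dj) \<Rightarrow> Var 0 ^ nat d0 * Var 1 ^ nat d1 * Var j ^ nat dj)"

definition omega_min :: "int \<Rightarrow> int \<Rightarrow> int \<Rightarrow> int \<Rightarrow> int" where
  "omega_min p q n c = (LEAST w. (n, c, w) \<in> Lambda p q)"

(* Lambda_(n,d), d \<in> Z/mZ represented by an integer representative *)
definition Lambda_nd :: "int \<Rightarrow> int \<Rightarrow> int \<Rightarrow> int \<Rightarrow> int \<Rightarrow> (int \<times> int \<times> int) set" where
  "Lambda_nd p q m n d = {(n', c, w). (n', c, w) \<in> Lambda p q \<and> n' = n \<and> [c = d] (mod m)}"

definition c_min :: "int \<Rightarrow> int \<Rightarrow> int \<Rightarrow> int \<Rightarrow> int \<Rightarrow> int" where
  "c_min p q m n d = (LEAST c. [c = d] (mod m) \<and> (\<exists>w. (n, c, w) \<in> Lambda p q))"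

end

theory Submission
  imports Defs
begin

text \<open>Write \<open>(n, c, \<omega>) = \<mu>(d\<^sub>0, d\<^sub>1, d\<^sub>j)\<close>, so that \<open>f\<^sub>\<lambda>\<close> is the monomial with exponents
  \<open>d\<^sub>0 = n + \<omega>\<close>, \<open>d\<^sub>1\<close>, \<open>d\<^sub>j\<close>. For fixed \<open>(n, c)\<close> the admissible \<open>\<omega>\<close> are the elements of the
  residue class of \<open>p c\<close> modulo \<open>q - p\<close> in the interval \<open>[-n, min (p c) (q c)]\<close>, so the minimum
  is \<open>(n + \<omega>) mod (q - p) - n\<close>, and \<open>\<omega>\<close> exceeds it iff \<open>d\<^sub>0 \<ge> q - p\<close>: this is (i).
  Such an \<open>\<omega>\<close> exists iff \<open>-n \<le> p c\<close> and \<open>-n \<le> q c\<close>, a condition upward closed in \<open>c\<close>; so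
  \<open>c > c_min\<close> forces it for \<open>c - m = c - a (q - p)\<close>. As \<open>n + p c = d\<^sub>0 + (q - p) d\<^sub>j\<close>,
  \<open>n + q c = d\<^sub>0 + (q - p) d\<^sub>1\<close>, and \<open>d\<^sub>0 < q - p\<close> when \<open>\<omega>\<close> is minimal, this gives
  \<open>d\<^sub>j \<ge> a p\<close> and \<open>d\<^sub>1 \<ge> a q\<close>, i.e. (ii).\<close>

lemma Var_pow: "Var i ^ k = Poly_Mapping.single (Poly_Mapping.single i k) 1"
  by (induction k) (simp_all add: Var_def mult_single flip: single_add)

lemma monomial_mem_pideal_iff:
  assumes "Poly_Mapping.keys u \<subseteq> V"
  shows "Poly_Mapping.single u (1::complex) \<in> pideal (polyring V) (Poly_Mapping.single t 1)
    \<longleftrightarrow> (\<forall>i. Poly_Mapping.lookup t i \<le> Poly_Mapping.lookup u i)"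
proof
  assume "Poly_Mapping.single u 1 \<in> pideal (polyring V) (Poly_Mapping.single t 1)"
  then obtain h where h: "Poly_Mapping.single u 1 = h * Poly_Mapping.single t (1::complex)"
    unfolding pideal_def by blast
  have "u \<in> Poly_Mapping.keys (h * Poly_Mapping.single t (1::complex))"
    by (simp flip: h)
  then obtain s where "u = s + t"
    using keys_mult[of h "Poly_Mapping.single t (1::complex)"] by auto
  then show "\<forall>i. Poly_Mapping.lookup t i \<le> Poly_Mapping.lookup u i"
    by (simp add: lookup_add)
next
  assume le: "\<forall>i. Poly_Mapping.lookup t i \<le> Poly_Mapping.lookup u i"
  have u: "u = (u - t) + t"
    by (rule poly_mapping_eqI) (simp add: lookup_add lookup_minus le)
  have "Poly_Mapping.keys (u - t) \<subseteq> V"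
    using assms by (auto simp: in_keys_iff lookup_minus)
  then show "Poly_Mapping.single u 1 \<in> pideal (polyring V) (Poly_Mapping.single t 1)"
    unfolding pideal_def polyring_def
    by (intro CollectI exI[of _ "Poly_Mapping.single (u - t) 1"]) (simp add: mult_single flip: u)
qed

lemma Var_pow3_eq_single:
  "Var x ^ a * Var y ^ b * Var z ^ c = Poly_Mapping.single
     (Poly_Mapping.single x a + Poly_Mapping.single y b + Poly_Mapping.single z c) 1"
  by (simp add: Var_pow mult_single)

lemma keys_single3_subset:
  "Poly_Mapping.keys (Poly_Mapping.single x a + Poly_Mapping.single y b + Poly_Mapping.single z c)
     \<subseteq> {x, y, z}"
  by (auto simp: in_keys_iff lookup_add lookup_single when_def split: if_splits)

lemma Var_pow3_mem_pideal_Var_pow_iff: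
  assumes "distinct [x, y, z]"
  shows "Var x ^ a * Var y ^ b * Var z ^ c \<in> pideal (polyring {x, y, z}) (Var x ^ k) \<longleftrightarrow> k \<le> a"
  unfolding Var_pow3_eq_single
  unfolding Var_pow monomial_mem_pideal_iff[OF keys_single3_subset]
  using assms by (auto simp: lookup_add lookup_single when_def)

lemma Var_pow3_mem_pideal_Var_pow_mult_Var_pow:
  assumes "distinct [x, y, z]" "k \<le> b" "l \<le> c"
  shows "Var x ^ a * Var y ^ b * Var z ^ c \<in> pideal (polyring {x, y, z}) (Var y ^ k * Var z ^ l)"
proof -
  have generator: "Var y ^ k * Var z ^ l
      = Poly_Mapping.single (Poly_Mapping.single y k + Poly_Mapping.single z l) 1"
    by (simp add: Var_pow mult_single)
  from assms show ?thesis
    unfolding Var_pow3_eq_single generator monomial_mem_pideal_iff[OF keys_single3_subset]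
    by (auto simp: lookup_add lookup_single when_def)
qed

lemma mem_Lambda_iff:
  "(n, c, w) \<in> Lambda p q \<longleftrightarrow>
     (\<exists>e. 0 \<le> e \<and> 0 \<le> c + e \<and> 0 \<le> n + w \<and> w = p * c - (q - p) * e)"
proof
  assume "(n, c, w) \<in> Lambda p q"
  then obtain d0 d1 dj where "0 \<le> d0" "0 \<le> d1" "0 \<le> dj" "mu p q (d0, d1, dj) = (n, c, w)"
    unfolding Lambda_def by auto
  then show "\<exists>e. 0 \<le> e \<and> 0 \<le> c + e \<and> 0 \<le> n + w \<and> w = p * c - (q - p) * e"
    unfolding mu_def by (intro exI[of _ dj]) (auto simp: algebra_simps)
next
  assume "\<exists>e. 0 \<le> e \<and> 0 \<le> c + e \<and> 0 \<le> n + w \<and> w = p * c - (q - p) * e"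
  then obtain e where e: "0 \<le> e" "0 \<le> c + e" "0 \<le> n + w" "w = p * c - (q - p) * e"
    by blast
  have "mu p q (n + w, c + e, e) = (n, c, w)"
    using e(4) unfolding mu_def by (simp add: algebra_simps)
  with e show "(n, c, w) \<in> Lambda p q"
    unfolding Lambda_def by (intro image_eqI[of _ _ "(n + w, c + e, e)"]) auto
qed

lemma Lambda_fibre_nonempty_iff:
  assumes "0 < p" "p < q"
  shows "(\<exists>w. (n, c, w) \<in> Lambda p q) \<longleftrightarrow> - n \<le> p * c \<and> - n \<le> q * c"
proof
  assume "\<exists>w. (n, c, w) \<in> Lambda p q"
  then obtain w e where e: "0 \<le> e" "0 \<le> c + e" "0 \<le> n + w" "w = p * c - (q - p) * e"
    by (auto simp: mem_Lambda_iff)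
  have "n + p * c = (n + w) + (q - p) * e" "n + q * c = (n + w) + (q - p) * (c + e)"
    using e(4) by (simp_all add: algebra_simps)
  moreover have "0 \<le> (q - p) * e" "0 \<le> (q - p) * (c + e)"
    using assms e by simp_all
  ultimately show "- n \<le> p * c \<and> - n \<le> q * c"
    using e(3) by linarith
next
  assume bounds: "- n \<le> p * c \<and> - n \<le> q * c"
  show "\<exists>w. (n, c, w) \<in> Lambda p q"
  proof (cases "0 \<le> c")
    case True
    with bounds show ?thesis
      by (auto simp: mem_Lambda_iff intro!: exI[of _ "p * c"] exI[of _ 0])
  next
    case False
    have "q * c = p * c - (q - p) * (- c)"
      by (simp add: algebra_simps)
    with False bounds show ?thesis
      by (auto simp: mem_Lambda_iff intro!: exI[of _ "q * c"] exI[of _ "- c"])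
  qed
qed

lemma Lambda_fibre_nonempty_mono:
  assumes "0 < p" "p < q" "\<exists>w. (n, c, w) \<in> Lambda p q" "c \<le> c'"
  shows "\<exists>w. (n, c', w) \<in> Lambda p q"
proof -
  have "- n \<le> p * c" "- n \<le> q * c"
    using assms by (simp_all add: Lambda_fibre_nonempty_iff)
  moreover have "p * c \<le> p * c'" "q * c \<le> q * c'"
    using assms by simp_all
  ultimately have "- n \<le> p * c' \<and> - n \<le> q * c'"
    by linarith
  with assms(1,2) show ?thesis
    by (simp add: Lambda_fibre_nonempty_iff)
qed

lemma inj_mu:
  assumes "p \<noteq> q"
  shows "inj (mu p q)"
proof (rule injI)
  fix x y
  assume "mu p q x = mu p q y"
  moreover obtain d0 d1 dj d0' d1' dj' where xy: "x = (d0, d1, dj)" "y = (d0', d1', dj')"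
    by (cases x, cases y) auto
  ultimately have c: "d1 - dj = d1' - dj'" and "p * d1 - q * dj = p * d1' - q * dj'"
    and n: "d0 - p * d1 + q * dj = d0' - p * d1' + q * dj'"
    unfolding mu_def by simp_all
  moreover have "p * d1 - q * dj = p * (d1 - dj) - (q - p) * dj"
    "p * d1' - q * dj' = p * (d1' - dj') - (q - p) * dj'"
    by (simp_all add: algebra_simps)
  ultimately have "(q - p) * dj = (q - p) * dj'"
    by simp
  with assms have "dj = dj'"
    by simp
  with c n xy show "x = y"
    by simp
qed

lemma flam_mu:
  assumes "p \<noteq> q" "0 \<le> d0" "0 \<le> d1" "0 \<le> dj"
  shows "flam p q j (mu p q (d0, d1, dj)) = Var 0 ^ nat d0 * Var 1 ^ nat d1 * Var j ^ nat dj"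
proof -
  have "(THE d. d \<in> {(d0, d1, dj). d0 \<ge> 0 \<and> d1 \<ge> 0 \<and> dj \<ge> 0} \<and> mu p q d = mu p q (d0, d1, dj))
      = (d0, d1, dj)"
    using assms inj_mu[OF assms(1)] by (intro the_equality) (auto dest: injD)
  then show ?thesis
    unfolding flam_def by simp
qed

lemma omega_min_eq:
  assumes "0 < p" "p < q" "(n, c, w) \<in> Lambda p q"
  shows "omega_min p q n c = (n + w) mod (q - p) - n"
  unfolding omega_min_def
proof (rule Least_equality)
  obtain e where e: "0 \<le> e" "0 \<le> c + e" "0 \<le> n + w" "w = p * c - (q - p) * e"
    using assms(3) by (auto simp: mem_Lambda_iff)
  define k where "k = (n + w) div (q - p)"
  have "0 \<le> k"
    using assms e(3) by (simp add: k_def pos_imp_zdiv_nonneg_iff)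
  moreover have "(n + w) mod (q - p) - n = p * c - (q - p) * (e + k)"
    using e(4) minus_div_mult_eq_mod[of "n + w" "q - p"] by (simp add: k_def algebra_simps)
  moreover have "0 \<le> (n + w) mod (q - p)"
    using assms by simp
  ultimately show "(n, c, (n + w) mod (q - p) - n) \<in> Lambda p q"
    using e unfolding mem_Lambda_iff by (intro exI[of _ "e + k"]) auto
next
  fix y
  assume "(n, c, y) \<in> Lambda p q"
  then obtain e' where e': "0 \<le> n + y" "y = p * c - (q - p) * e'"
    by (auto simp: mem_Lambda_iff)
  obtain e where e: "w = p * c - (q - p) * e"
    using assms(3) by (auto simp: mem_Lambda_iff)
  have "n + y = n + w + (q - p) * (e - e')"
    using e e' by (simp add: algebra_simps)
  then have "(n + w) mod (q - p) = (n + y) mod (q - p)"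
    by (simp only: mod_mult_self2)
  also have "\<dots> \<le> n + y"
    using assms e'(1) by (simp add: zmod_le_nonneg_dividend)
  finally show "(n + w) mod (q - p) - n \<le> y"
    by simp
qed

lemma omega_min_less_iff:
  assumes "0 < p" "p < q" "(n, c, w) \<in> Lambda p q"
  shows "omega_min p q n c < w \<longleftrightarrow> q - p \<le> n + w"
proof -
  have "0 \<le> n + w"
    using assms(3) by (auto simp: mem_Lambda_iff)
  then have "(n + w) mod (q - p) = n + w \<longleftrightarrow> n + w < q - p"
    and "(n + w) mod (q - p) \<le> n + w"
    using assms(1,2) zmod_trivial_iff[of "n + w" "q - p"] by (auto simp: zmod_le_nonneg_dividend)
  then show ?thesis
    unfolding omega_min_eq[OF assms] by linarith
qed

lemma c_min_lt_imp_fibre_nonempty: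
  assumes "0 < p" "p < q" "0 < m" "(n, c, w) \<in> Lambda p q" "[c = d] (mod m)"
    and "c_min p q m n d < c"
  shows "\<exists>w. (n, c - m, w) \<in> Lambda p q"
proof (rule ccontr)
  assume empty: "\<nexists>w. (n, c - m, w) \<in> Lambda p q"
  have "c_min p q m n d = c"
    unfolding c_min_def
  proof (rule Least_equality)
    show "[c = d] (mod m) \<and> (\<exists>w. (n, c, w) \<in> Lambda p q)"
      using assms(4,5) by blast
  next
    fix y
    assume y: "[y = d] (mod m) \<and> (\<exists>w. (n, y, w) \<in> Lambda p q)"
    show "c \<le> y"
    proof (rule ccontr)
      assume "\<not> c \<le> y"
      moreover have "m dvd c - y"
        using y assms(5) by (metis cong_iff_dvd_diff cong_sym cong_trans)
      ultimately have "y \<le> c - m"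
        using zdvd_imp_le by fastforce
      with y empty show False
        using Lambda_fibre_nonempty_mono[OF assms(1,2)] by blast
    qed
  qed
  with assms(6) show False
    by simp
qed

lemma le_of_mult_le_remainder_add_mult:
  fixes k r b x :: int
  assumes "0 \<le> r" "r < k" "k * b \<le> r + k * x"
  shows "b \<le> x"
proof -
  have "k * b < k * (x + 1)"
    using assms by (simp add: algebra_simps)
  with assms show ?thesis
    by (simp add: mult_less_cancel_left_pos)
qed

lemma exponents_ge_if_omega_min_and_c_min_less:
  assumes "0 < p" "p < q" "0 < m" "m = a * (q - p)"
    and "0 \<le> d0" "0 \<le> d1" "0 \<le> dj" "mu p q (d0, d1, dj) = (n, c, w)"
    and "[c = d] (mod m)" "w = omega_min p q n c" "c_min p q m n d < c"
  shows "a * p \<le> dj \<and> a * q \<le> d1"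
proof -
  have n: "n = d0 - p * d1 + q * dj" and c: "c = d1 - dj" and w: "w = p * d1 - q * dj"
    using assms(8) unfolding mu_def by auto
  have L: "(n, c, w) \<in> Lambda p q"
    using assms(5-8) unfolding Lambda_def by force
  have "d0 < q - p"
    using omega_min_less_iff[OF assms(1,2) L] assms(10) n w by simp
  obtain w' where "(n, c - m, w') \<in> Lambda p q"
    using c_min_lt_imp_fibre_nonempty[OF assms(1-3) L assms(9,11)] by blast
  then have "- n \<le> p * (c - m)" "- n \<le> q * (c - m)"
    using Lambda_fibre_nonempty_iff[OF assms(1,2)] by blast+
  moreover have "n + p * (c - m) = d0 + (q - p) * dj - (q - p) * (a * p)"
    "n + q * (c - m) = d0 + (q - p) * d1 - (q - p) * (a * q)"
    by (simp_all add: n c assms(4) algebra_simps)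
  ultimately have "(q - p) * (a * p) \<le> d0 + (q - p) * dj" "(q - p) * (a * q) \<le> d0 + (q - p) * d1"
    by linarith+
  with assms(5) \<open>d0 < q - p\<close> show ?thesis
    by (auto intro: le_of_mult_le_remainder_add_mult)
qed

theorem lemma4p19:
  fixes p q m n c w d :: int and j :: nat
  assumes "0 < p" and "p < q" and "coprime p q" and "0 < m" and "j \<in> {3, 4}"
    and "(n, c, w) \<in> Lambda_nd p q m n d"
  shows "(flam p q j (n, c, w) \<in> pideal (polyring {0, 1, j}) (Var 0 ^ nat (q - p))
           \<longleftrightarrow> w > omega_min p q n c)
      \<and> (\<forall>a. 0 < a \<longrightarrow> m = a * (q - p) \<longrightarrow> w = omega_min p q n c \<longrightarrow> c > c_min p q m n d \<longrightarrow>
           flam p q j (n, c, w) \<in> pideal (polyring {0, 1, j}) (Var 1 ^ nat (a * q) * Var j ^ nat (a * p)))"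
proof -
  have L: "(n, c, w) \<in> Lambda p q" and cong: "[c = d] (mod m)"
    using assms(6) unfolding Lambda_nd_def by auto
  then obtain d0 d1 dj where d: "0 \<le> d0" "0 \<le> d1" "0 \<le> dj"
    and mu: "mu p q (d0, d1, dj) = (n, c, w)"
    unfolding Lambda_def by auto
  have flam: "flam p q j (n, c, w) = Var 0 ^ nat d0 * Var 1 ^ nat d1 * Var j ^ nat dj"
    using flam_mu[of p q d0 d1 dj j] mu d assms(2) by simp
  have distinct: "distinct [0, 1, j]"
    using assms(5) by auto
  have "n + w = d0"
    using mu unfolding mu_def by auto
  with d(1) have "flam p q j (n, c, w) \<in> pideal (polyring {0, 1, j}) (Var 0 ^ nat (q - p))
           \<longleftrightarrow> w > omega_min p q n c"
    unfolding flam Var_pow3_mem_pideal_Var_pow_iff[OF distinct] omega_min_less_iff[OF assms(1,2) L]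
    by (simp add: nat_le_eq_zle)
  moreover have "flam p q j (n, c, w) \<in> pideal (polyring {0, 1, j}) (Var 1 ^ nat (a * q) * Var j ^ nat (a * p))"
    if "m = a * (q - p)" "w = omega_min p q n c" "c > c_min p q m n d" for a
  proof -
    have "a * p \<le> dj" "a * q \<le> d1"
      using exponents_ge_if_omega_min_and_c_min_less[OF assms(1,2,4) that(1) d mu cong that(2,3)] by auto
    then show ?thesis
      unfolding flam by (intro Var_pow3_mem_pideal_Var_pow_mult_Var_pow distinct nat_mono)
  qed
  ultimately show ?thesis
    by blast
qed

end
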